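(* Let $a=\sum_{t=0}^7a_te_t\in C\ell_{1,2}$ and let $\mathbf{i}=\sqrt{-1}\in\mathbb{C}$. The (complex) eigenvalues of $L(a)$ are $$\lambda_{1,2}=a_0+a_7\mathbf{i}\pm\sqrt{(a_0+a_7\mathbf{i})^2-N(a)-2T(a)\mathbf{i}},\qquad \lambda_{3,4}=a_0-a_7\mathbf{i}\pm\sqrt{(a_0-a_7\mathbf{i})^2-N(a)+2T(a)\mathbf{i}},$$ and each eigenvalue occurs with algebraic multiplicity $2$.
   Context: $C\ell_{1,2}$ is the real Clifford algebra generated by $i_1,i_2,i_3$ with $i_1^2=1$, $i_2^2=i_3^2=-1$ and $i_ti_m=-i_mi_t$ for $t\neq m$, with real basis $e_0=1$, $e_1=i_1$, $e_2=i_2$, $e_3=i_1i_2$, $e_4=i_3$, $e_5=i_1i_3$, $e_6=i_2i_3$, $e_7=i_1i_2i_3$. For $x=\sum_{t=0}^7x_te_t$ write $\overrightarrow{x}=(x_0,\dots,x_7)^T\in\mathbb{R}^8$. For $a\in C\ell_{1,2}$, $L(a)$ is the real $8\times8$ matrix with $\overrightarrow{ax}=L(a)\overrightarrow{x}$ for all $x$. For $a=\sum a_te_t$: $N(a)=a_0^2-a_1^2+a_2^2-a_3^2+a_4^2-a_5^2+a_6^2-a_7^2$ and $T(a)=a_0a_7+a_2a_5-a_1a_6-a_3a_4$. *)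

theory Defs
  imports Complex_Main "Jordan_Normal_Form.Char_Poly"
begin

(* Elements of Cl_{1,2} are represented by coefficient functions x :: nat => real,
   x = sum_{t<8} x t * e_t (values at indices >= 8 are ignored).
   Index t = b1 + 2*b2 + 4*b3 (bits b_k in {0,1}) encodes the basis monomial
   e_t = i1^b1 * i2^b2 * i3^b3; this matches e_0=1, e_1=i1, e_2=i2, e_3=i1i2,
   e_4=i3, e_5=i1i3, e_6=i2i3, e_7=i1i2i3. *)

definition cl_bit :: "nat \<Rightarrow> nat \<Rightarrow> nat" where
  "cl_bit k t = (t div 2 ^ k) mod 2"

definition cl_idx :: "nat \<Rightarrow> nat \<Rightarrow> nat" where
  "cl_idx s t = (cl_bit 0 s + cl_bit 0 t) mod 2 + 2 * ((cl_bit 1 s + cl_bit 1 t) mod 2)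
                 + 4 * ((cl_bit 2 s + cl_bit 2 t) mod 2)"

(* sign in e_s * e_t = cl_sign s t * e_(cl_idx s t): anticommuting i1,i2,i3 past each other,
   then i1^2 = 1, i2^2 = -1, i3^2 = -1 *)
definition cl_sign :: "nat \<Rightarrow> nat \<Rightarrow> real" where
  "cl_sign s t = (-1) ^ (cl_bit 0 t * cl_bit 1 s + cl_bit 0 t * cl_bit 2 s + cl_bit 1 t * cl_bit 2 s
                        + cl_bit 1 s * cl_bit 1 t + cl_bit 2 s * cl_bit 2 t)"

definition cl_mult :: "(nat \<Rightarrow> real) \<Rightarrow> (nat \<Rightarrow> real) \<Rightarrow> (nat \<Rightarrow> real)" where
  "cl_mult x y = (\<lambda>k. \<Sum>s<8. \<Sum>t<8. if cl_idx s t = k then cl_sign s t * x s * y t else 0)"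

definition cl_basis :: "nat \<Rightarrow> (nat \<Rightarrow> real)" where
  "cl_basis t = (\<lambda>k. if k = t then 1 else 0)"

definition L_mat :: "(nat \<Rightarrow> real) \<Rightarrow> real mat" where
  "L_mat a = mat 8 8 (\<lambda>(k, t). cl_mult a (cl_basis t) k)"

definition cl_N :: "(nat \<Rightarrow> real) \<Rightarrow> real" where
  "cl_N a = (a 0)\<^sup>2 - (a 1)\<^sup>2 + (a 2)\<^sup>2 - (a 3)\<^sup>2 + (a 4)\<^sup>2 - (a 5)\<^sup>2 + (a 6)\<^sup>2 - (a 7)\<^sup>2"

definition cl_T :: "(nat \<Rightarrow> real) \<Rightarrow> real" where
  "cl_T a = a 0 * a 7 + a 2 * a 5 - a 1 * a 6 - a 3 * a 4"

end

theory Submission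
  imports Defs
begin

text \<open>
  Since \<open>e\<^sub>7 = i\<^sub>1 i\<^sub>2 i\<^sub>3\<close> is central with \<open>e\<^sub>7\<^sup>2 = -1\<close>, the algebra \<open>Cl_{1,2}\<close> is
  complex and isomorphic to the \<open>2 \<times> 2\<close> complex matrices, \<open>a \<mapsto> A\<close>. After complexification
  it splits into two copies of these matrices, on which \<open>e\<^sub>7\<close> acts by \<open>\<i>\<close> and by \<open>-\<i>\<close>,
  and left multiplication by a matrix acts on each column separately. Hence \<open>L(a)\<close> is
  similar over \<open>\<complex>\<close> to \<open>diag(A, conj A, A, conj A)\<close>, and its characteristic polynomial is
  the square of \<open>\<chi>\<^sub>A \<chi>\<^bsub>conj A\<^esub>\<close>, where
  \<open>\<chi>\<^sub>A = x\<^sup>2 - 2 (a\<^sub>0 + a\<^sub>7 \<i>) x + N(a) + 2 T(a) \<i>\<close>; the four eigenvalues are the roots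
  of these two quadratics.
\<close>

lemma mat_of_rows_list_carrier:
  "length rs = m \<Longrightarrow> mat_of_rows_list n rs \<in> carrier_mat m n"
  by (simp add: mat_of_rows_list_def)

lemma similar_matI_intertwining:
  assumes carrier: "{A, B, P, Q} \<subseteq> carrier_mat n n"
    and inverse: "P * Q = 1\<^sub>m n" "Q * P = 1\<^sub>m n"
    and intertwining: "A * P = P * B"
  shows "similar_mat A B"
proof (rule similar_matI[OF carrier inverse])
  have A: "A \<in> carrier_mat n n" and P: "P \<in> carrier_mat n n" and Q: "Q \<in> carrier_mat n n"
    using carrier by auto
  have "A = A * (P * Q)"
    using A by (simp add: inverse)
  also have "\<dots> = A * P * Q"
    using A P Q by (simp add: assoc_mult_mat)
  also have "\<dots> = P * B * Q"
    by (simp add: intertwining)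
  finally show "A = P * B * Q" .
qed

lemma char_poly_four_block_diag:
  fixes A :: "'a::idom mat"
  assumes A: "A \<in> carrier_mat n n" and B: "B \<in> carrier_mat m m"
  shows "char_poly (four_block_mat A (0\<^sub>m n m) (0\<^sub>m m n) B) = char_poly A * char_poly B"
proof -
  have "char_poly_matrix (four_block_mat A (0\<^sub>m n m) (0\<^sub>m m n) B)
      = four_block_mat (char_poly_matrix A) (0\<^sub>m n m) (0\<^sub>m m n) (char_poly_matrix B)"
    using A B by (intro eq_matI) (auto simp: char_poly_matrix_def)
  then show ?thesis
    unfolding char_poly_def
    by (simp add: det_four_block_mat_lower_left_zero[OF char_poly_matrix_closed[OF A] _ _
          char_poly_matrix_closed[OF B]])
qed

lemma char_poly_diag_block_mat:
  fixes As :: "'a::idom mat list"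
  assumes "\<forall>A \<in> set As. dim_row A = dim_col A"
  shows "char_poly (diag_block_mat As) = prod_list (map char_poly As)"
  using assms
proof (induction As)
  case Nil
  have "char_poly_matrix (0\<^sub>m 0 0 :: 'a mat) = 1\<^sub>m 0"
    by (rule eq_matI) (simp_all add: char_poly_matrix_def)
  then show ?case
    unfolding char_poly_def by (simp only: diag_block_mat.simps det_one list.map prod_list.Nil)
next
  case (Cons A As)
  define B where "B = diag_block_mat As"
  have square_A: "dim_col A = dim_row A" and square_As: "\<forall>A' \<in> set As. dim_row A' = dim_col A'"
    using Cons.prems by auto
  have "map dim_col As = map dim_row As"
    using square_As by (intro map_cong) auto
  then have square_B: "dim_col B = dim_row B"
    unfolding B_def dim_diag_block_mat by (simp only:)
  have "diag_block_mat (A # As)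
      = four_block_mat A (0\<^sub>m (dim_row A) (dim_row B)) (0\<^sub>m (dim_row B) (dim_row A)) B"
    by (simp only: diag_block_mat.simps Let_def B_def[symmetric] square_A square_B)
  also have "char_poly \<dots> = char_poly A * char_poly B"
    using square_A square_B by (intro char_poly_four_block_diag carrier_matI) simp_all
  finally show ?case
    using Cons.IH[OF square_As] by (simp add: B_def)
qed

lemma det_mat_2:
  assumes A: "A \<in> carrier_mat 2 2"
  shows "det A = A $$ (0, 0) * A $$ (1, 1) - A $$ (0, 1) * A $$ (1, 0)"
  using A
  apply (subst laplace_expansion_row[OF A, of 0])
   apply (simp_all add: cofactor_def numeral_eq_Suc lessThan_Suc)
  apply (subst det_single; simp add: mat_delete_def)+
  done

lemma char_poly_mat_2:
  fixes A :: "'a::comm_ring_1 mat"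
  assumes A: "A \<in> carrier_mat 2 2"
  shows "char_poly A
    = [:A $$ (0, 0) * A $$ (1, 1) - A $$ (0, 1) * A $$ (1, 0), - (A $$ (0, 0) + A $$ (1, 1)), 1:]"
proof -
  have "char_poly A = [:- A $$ (0, 0), 1:] * [:- A $$ (1, 1), 1:] - [:- A $$ (0, 1):] * [:- A $$ (1, 0):]"
    unfolding char_poly_def using A by (subst det_mat_2) (auto simp: char_poly_matrix_def)
  then show ?thesis
    by (simp add: algebra_simps)
qed

lemma monic_quadratic_eq_linear_factors:
  fixes c w r :: "'a::comm_ring_1"
  assumes "r\<^sup>2 = w\<^sup>2 - c"
  shows "[:c, - 2 * w, 1:] = [:- (w + r), 1:] * [:- (w - r), 1:]"
  using assms by (simp add: algebra_simps power2_eq_square)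

lemma sum_lessThan_8:
  "(\<Sum>s<(8::nat). f s) = f 0 + f 1 + f 2 + f 3 + f 4 + f 5 + f 6 + (f 7 :: 'a::comm_monoid_add)"
  by (simp add: eval_nat_numeral ac_simps)

lemma all_less_8_iff:
  "(\<forall>i<8. P i) \<longleftrightarrow> P 0 \<and> P 1 \<and> P 2 \<and> P 3 \<and> P 4 \<and> P 5 \<and> P 6 \<and> P (7::nat)"
  by (simp add: numeral_eq_Suc All_less_Suc conj_ac)

lemma eq_mat_8I:
  assumes "A \<in> carrier_mat 8 8" "B \<in> carrier_mat 8 8"
    and "\<forall>i<8. \<forall>j<8. A $$ (i, j) = B $$ (i, j)"
  shows "A = B"
  using assms by (intro eq_matI) auto

lemma L_mat_explicit:
  "L_mat a = mat_of_rows_list 8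
     [[a 0, a 1, - a 2, a 3, - a 4, a 5, - a 6, - a 7],
      [a 1, a 0, - a 3, a 2, - a 5, a 4, - a 7, - a 6],
      [a 2, - a 3, a 0, a 1, - a 6, - a 7, a 4, - a 5],
      [a 3, - a 2, a 1, a 0, - a 7, - a 6, a 5, - a 4],
      [a 4, - a 5, a 6, a 7, a 0, a 1, - a 2, a 3],
      [a 5, - a 4, a 7, a 6, a 1, a 0, - a 3, a 2],
      [a 6, a 7, - a 4, a 5, a 2, - a 3, a 0, a 1],
      [a 7, a 6, - a 5, a 4, a 3, - a 2, a 1, a 0]]"
  by (intro eq_mat_8I mat_of_rows_list_carrier, simp add: L_mat_def, simp, unfold all_less_8_iff)
    (simp add: L_mat_def mat_of_rows_list_def cl_mult_def cl_basis_def cl_idx_def cl_sign_def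
      cl_bit_def sum_lessThan_8)

text \<open>The isomorphism of \<open>Cl_{1,2}\<close> onto the complex \<open>2 \<times> 2\<close> matrices with \<open>e\<^sub>7 \<mapsto> \<i>\<close>.\<close>

definition cl_rep :: "(nat \<Rightarrow> real) \<Rightarrow> complex mat" where
  "cl_rep a = mat_of_rows_list 2
     [[Complex (a 0 + a 1) (a 6 + a 7), Complex (- a 2 - a 3) (- a 4 - a 5)],
      [Complex (a 2 - a 3) (a 5 - a 4), Complex (a 0 - a 1) (a 7 - a 6)]]"

lemma cl_rep_carrier: "cl_rep a \<in> carrier_mat 2 2"
  by (simp add: cl_rep_def mat_of_rows_list_carrier)

definition cl_block_diag :: "(nat \<Rightarrow> real) \<Rightarrow> complex mat" where
  "cl_block_diag a =
     diag_block_mat [cl_rep a, map_mat cnj (cl_rep a), cl_rep a, map_mat cnj (cl_rep a)]"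

lemma cl_block_diag_carrier: "cl_block_diag a \<in> carrier_mat 8 8"
  by (rule carrier_matI)
    (simp_all add: cl_block_diag_def dim_diag_block_mat carrier_matD[OF cl_rep_carrier])

definition cl_block_basis :: "complex mat" where
  "cl_block_basis = mat_of_rows_list 8
     [[1, 0, 1, 0, 0, 1, 0, 1],
      [1, 0, 1, 0, 0, -1, 0, -1],
      [0, 1, 0, 1, -1, 0, -1, 0],
      [0, -1, 0, -1, -1, 0, -1, 0],
      [0, \<i>, 0, -\<i>, \<i>, 0, -\<i>, 0],
      [0, -\<i>, 0, \<i>, \<i>, 0, -\<i>, 0],
      [-\<i>, 0, \<i>, 0, 0, \<i>, 0, -\<i>],
      [-\<i>, 0, \<i>, 0, 0, -\<i>, 0, \<i>]]"

text \<open>The columns of \<^const>\<open>cl_block_basis\<close> are pairwise orthogonal, each of squared norm 4.\<close>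

definition cl_block_basis_inv :: "complex mat" where
  "cl_block_basis_inv = (1 / 4) \<cdot>\<^sub>m map_mat cnj (transpose_mat cl_block_basis)"

lemma cl_block_basis_carrier: "cl_block_basis \<in> carrier_mat 8 8"
  and cl_block_basis_inv_carrier: "cl_block_basis_inv \<in> carrier_mat 8 8"
  by (simp_all add: cl_block_basis_def cl_block_basis_inv_def mat_of_rows_list_carrier)

lemma cl_block_basis_inverse:
  "cl_block_basis * cl_block_basis_inv = 1\<^sub>m 8"
  "cl_block_basis_inv * cl_block_basis = 1\<^sub>m 8"
  by (intro eq_mat_8I mult_carrier_mat[of _ 8 8 _ 8] one_carrier_mat
        cl_block_basis_carrier cl_block_basis_inv_carrier,
      unfold all_less_8_iff,
      simp add: cl_block_basis_def cl_block_basis_inv_def mat_of_rows_list_def scalar_prod_def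
        atLeast0LessThan sum_lessThan_8)+

lemma L_mat_block_basis:
  "map_mat complex_of_real (L_mat a) * cl_block_basis = cl_block_basis * cl_block_diag a"
  by (intro eq_mat_8I mult_carrier_mat[of _ 8 8 _ 8] cl_block_basis_carrier cl_block_diag_carrier,
      simp add: L_mat_def, unfold all_less_8_iff)
    (simp add: L_mat_explicit cl_block_basis_def cl_block_diag_def cl_rep_def
      mat_of_rows_list_def Let_def scalar_prod_def atLeast0LessThan sum_lessThan_8 complex_eq_iff)

lemma char_poly_cl_rep:
  "char_poly (cl_rep a) = [:of_real (cl_N a) + 2 * of_real (cl_T a) * \<i>, - 2 * Complex (a 0) (a 7), 1:]"
  unfolding char_poly_mat_2[OF cl_rep_carrier]
  by (simp add: cl_rep_def mat_of_rows_list_def complex_eq_iff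
      cl_N_def cl_T_def power2_eq_square algebra_simps)

lemma char_poly_cnj_cl_rep:
  "char_poly (map_mat cnj (cl_rep a))
    = [:of_real (cl_N a) - 2 * of_real (cl_T a) * \<i>, - 2 * Complex (a 0) (- a 7), 1:]"
  by (subst char_poly_mat_2, simp add: cl_rep_carrier)
    (simp add: cl_rep_def mat_of_rows_list_def complex_eq_iff
      cl_N_def cl_T_def power2_eq_square algebra_simps)

lemma char_poly_L_mat:
  "char_poly (map_mat complex_of_real (L_mat a))
    = (char_poly (cl_rep a) * char_poly (map_mat cnj (cl_rep a)))\<^sup>2"
proof -
  have "similar_mat (map_mat complex_of_real (L_mat a)) (cl_block_diag a)"
    using cl_block_basis_carrier cl_block_basis_inv_carrier cl_block_diag_carrier[of a]
    by (intro similar_matI_intertwining[OF _ cl_block_basis_inverse L_mat_block_basis])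
      (simp add: L_mat_def)
  then have "char_poly (map_mat complex_of_real (L_mat a)) = char_poly (cl_block_diag a)"
    by (rule char_poly_similar)
  also have "\<dots> = prod_list (map char_poly
      [cl_rep a, map_mat cnj (cl_rep a), cl_rep a, map_mat cnj (cl_rep a)])"
    unfolding cl_block_diag_def
    by (rule char_poly_diag_block_mat) (simp add: carrier_matD[OF cl_rep_carrier])
  finally show ?thesis
    by (simp add: power2_eq_square ac_simps)
qed

theorem proposition2p5:
  fixes a :: "nat \<Rightarrow> real"
  shows "let w1 = Complex (a 0) (a 7); w2 = Complex (a 0) (- a 7);
             r1 = csqrt (w1\<^sup>2 - of_real (cl_N a) - 2 * of_real (cl_T a) * \<i>);
             r2 = csqrt (w2\<^sup>2 - of_real (cl_N a) + 2 * of_real (cl_T a) * \<i>);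
             l1 = w1 + r1; l2 = w1 - r1; l3 = w2 + r2; l4 = w2 - r2
         in char_poly (map_mat complex_of_real (L_mat a))
              = ([:- l1, 1:] * [:- l2, 1:] * [:- l3, 1:] * [:- l4, 1:]) ^ 2"
proof -
  define w1 where "w1 = Complex (a 0) (a 7)"
  define w2 where "w2 = Complex (a 0) (- a 7)"
  define r1 where "r1 = csqrt (w1\<^sup>2 - of_real (cl_N a) - 2 * of_real (cl_T a) * \<i>)"
  define r2 where "r2 = csqrt (w2\<^sup>2 - of_real (cl_N a) + 2 * of_real (cl_T a) * \<i>)"
  have "char_poly (cl_rep a) = [:- (w1 + r1), 1:] * [:- (w1 - r1), 1:]"
    unfolding char_poly_cl_rep w1_def[symmetric]
    by (rule monic_quadratic_eq_linear_factors) (simp add: r1_def)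
  moreover have "char_poly (map_mat cnj (cl_rep a)) = [:- (w2 + r2), 1:] * [:- (w2 - r2), 1:]"
    unfolding char_poly_cnj_cl_rep w2_def[symmetric]
    by (rule monic_quadratic_eq_linear_factors) (simp add: r2_def)
  ultimately show ?thesis
    unfolding Let_def w1_def[symmetric] w2_def[symmetric] r1_def[symmetric] r2_def[symmetric]
      char_poly_L_mat
    by (simp only: mult.assoc)
qed

end
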